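(* For $k\ge2$, the minimum Hamming distance of $\mathcal{S}_k^\beta$ is $d_H(\mathcal{S}_k^\beta)=L_\beta(k)-q^{s-1}L_\beta(k-1)=q^{s(k-1)}$, where $L_\beta(m)=q^{(s-1)(m-1)}\frac{q^m-1}{q-1}$.
   Context: Let $R$ be a finite commutative chain ring with maximal ideal $\langle\gamma\rangle$, nilpotency index $s$ and residue field $R/\langle\gamma\rangle\cong\mathbb{F}_q$. Fix coset representatives $T=\{e_0,\dots,e_{q-1}\}$ with $e_0=0,e_1=1$, ordered $e_0<\dots<e_{q-1}$; each $r\in R$ is uniquely $\sum_{i=0}^{s-1}r_i\gamma^i$, $r_i\in T$; order $R$ by $x>y$ iff $x_i>y_i$ in $T$ for the largest $i$ with $x_i\neq y_i$; list $R=\{\rho_0,\dots,\rho_{q^s-1}\}$ increasingly. $\mathbf{a}^{(m)}$ is the constant vector of length $m$. Define $G_1^\alpha=(\rho_0\ \cdots\ \rho_{q^s-1})$ and, for $k>1$, $G_k^\alpha$ as the matrix of $q^s$ column blocks, the $j$-th having first row $\boldsymbol{\rho_j}^{(q^{s(k-1)})}$ and $G_{k-1}^\alpha$ below. List $\langle\gamma\rangle$ increasingly as $a_0\gamma<\dots<a_{q^{s-1}-1}\gamma$. Define $G_1^\beta=(1)$ and, for $k>1$, $G_k^\beta$ as the matrix with column blocks: first a block with first row $\mathbf{1}^{(q^{s(k-1)})}$ and $G_{k-1}^\alpha$ below; then for each $j=0,\dots,q^{s-1}-1$ a block with first row the constant vector with entry $a_j\gamma$ and $G_{k-1}^\beta$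 below. $\mathcal{S}_k^\beta$ is the $R$-submodule generated by the rows of $G_k^\beta$. The minimum Hamming distance of a code is the minimum Hamming distance (number of differing coordinates) between two distinct codewords. *)

theory Defs
  imports Main
begin

definition is_ideal :: "'a::comm_ring_1 set \<Rightarrow> bool" where
  "is_ideal I \<longleftrightarrow> 0 \<in> I \<and> (\<forall>x\<in>I. \<forall>y\<in>I. x + y \<in> I) \<and> (\<forall>r. \<forall>x\<in>I. r * x \<in> I)"

definition principal_ideal :: "'a::comm_ring_1 \<Rightarrow> 'a set" where
  "principal_ideal g = range (\<lambda>r. r * g)"

definition maximal_ideal :: "'a::comm_ring_1 set \<Rightarrow> bool" where
  "maximal_ideal I \<longleftrightarrow> is_ideal I \<and> I \<noteq> UNIV \<and>
     (\<forall>J. is_ideal J \<longrightarrow> I \<subseteq> J \<longrightarrow> J = I \<or> J = UNIV)"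

definition chain_ring :: "'a::comm_ring_1 itself \<Rightarrow> bool" where
  "chain_ring TYPE('a) \<longleftrightarrow>
     (\<forall>I J :: 'a set. is_ideal I \<longrightarrow> is_ideal J \<longrightarrow> I \<subseteq> J \<or> J \<subseteq> I)"

text \<open>The coset representatives are e 0 < e 1 < ... < e (q-1) (the order on T is the
  index order). The digits of x are the indices d i with x = sum_{i<s} e(d i) * g^i.\<close>
definition digits :: "'a::comm_ring_1 \<Rightarrow> nat \<Rightarrow> nat \<Rightarrow> (nat \<Rightarrow> 'a) \<Rightarrow> 'a \<Rightarrow> nat \<Rightarrow> nat" where
  "digits g s q e x = (THE d. (\<forall>i. d i < q) \<and> (\<forall>i. s \<le> i \<longrightarrow> d i = 0) \<and>
                           x = (\<Sum>i<s. e (d i) * g ^ i))"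

definition ring_less :: "'a::comm_ring_1 \<Rightarrow> nat \<Rightarrow> nat \<Rightarrow> (nat \<Rightarrow> 'a) \<Rightarrow> 'a \<Rightarrow> 'a \<Rightarrow> bool" where
  "ring_less g s q e x y \<longleftrightarrow> x \<noteq> y \<and>
     (let i = (GREATEST i. digits g s q e x i \<noteq> digits g s q e y i)
      in digits g s q e x i < digits g s q e y i)"

definition rho :: "'a::{comm_ring_1,finite} \<Rightarrow> nat \<Rightarrow> nat \<Rightarrow> (nat \<Rightarrow> 'a) \<Rightarrow> nat \<Rightarrow> 'a" where
  "rho g s q e j = (THE x. card {y. ring_less g s q e y x} = j)"

text \<open>agam j: the j-th element (0-based) of the ideal <g> in increasing order, i.e. a_j g.\<close>
definition agam :: "'a::{comm_ring_1,finite} \<Rightarrow> nat \<Rightarrow> nat \<Rightarrow> (nat \<Rightarrow> 'a) \<Rightarrow> nat \<Rightarrow> 'a" where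
  "agam g s q e j = (THE x. x \<in> principal_ideal g \<and>
       card {y \<in> principal_ideal g. ring_less g s q e y x} = j)"

section \<open>Generator matrices (as functions row \<Rightarrow> column \<Rightarrow> entry, 0-based)\<close>

text \<open>Galpha rh N k: the k x N^k matrix G_k^alpha, with N = q^s and rh = rho.\<close>
fun Galpha :: "(nat \<Rightarrow> 'a) \<Rightarrow> nat \<Rightarrow> nat \<Rightarrow> nat \<Rightarrow> nat \<Rightarrow> 'a" where
  "Galpha rh N 0 r c = undefined"
| "Galpha rh N (Suc 0) r c = rh c"
| "Galpha rh N (Suc (Suc k)) r c =
     (if r = 0 then rh (c div N ^ Suc k)
      else Galpha rh N (Suc k) (r - 1) (c mod N ^ Suc k))"

text \<open>Number of columns of G_k^beta (N = q^s, M = q^(s-1) = |<g>|).\<close>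
fun nbeta :: "nat \<Rightarrow> nat \<Rightarrow> nat \<Rightarrow> nat" where
  "nbeta N M 0 = 0"
| "nbeta N M (Suc 0) = 1"
| "nbeta N M (Suc (Suc k)) = N ^ Suc k + M * nbeta N M (Suc k)"

fun Gbeta :: "(nat \<Rightarrow> 'a::comm_ring_1) \<Rightarrow> (nat \<Rightarrow> 'a) \<Rightarrow> nat \<Rightarrow> nat \<Rightarrow> nat \<Rightarrow> nat \<Rightarrow> nat \<Rightarrow> 'a" where
  "Gbeta rh ag N M 0 r c = undefined"
| "Gbeta rh ag N M (Suc 0) r c = 1"
| "Gbeta rh ag N M (Suc (Suc k)) r c =
     (if c < N ^ Suc k then
        (if r = 0 then 1 else Galpha rh N (Suc k) (r - 1) c)
      else
        (let c' = c - N ^ Suc k; j = c' div nbeta N M (Suc k); off = c' mod nbeta N M (Suc k)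
         in if r = 0 then ag j else Gbeta rh ag N M (Suc k) (r - 1) off))"

definition row_span :: "(nat \<Rightarrow> nat \<Rightarrow> 'a::comm_ring_1) \<Rightarrow> nat \<Rightarrow> nat \<Rightarrow> 'a list set" where
  "row_span G k n = {map (\<lambda>c. \<Sum>r<k. l r * G r c) [0..<n] | l. True}"

definition hamming :: "'a list \<Rightarrow> 'a list \<Rightarrow> nat" where
  "hamming x y = card {i. i < length x \<and> x ! i \<noteq> y ! i}"

definition min_dist :: "'a list set \<Rightarrow> nat" where
  "min_dist C = Min {hamming x y | x y. x \<in> C \<and> y \<in> C \<and> x \<noteq> y}"

definition S_beta :: "'a::{comm_ring_1,finite} \<Rightarrow> nat \<Rightarrow> nat \<Rightarrow> (nat \<Rightarrow> 'a) \<Rightarrow> nat \<Rightarrow> 'a list set" where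
  "S_beta g s q e k =
     row_span (Gbeta (rho g s q e) (agam g s q e) (q ^ s) (q ^ (s - 1)) k) k
              (nbeta (q ^ s) (q ^ (s - 1)) k)"

definition L_beta :: "nat \<Rightarrow> nat \<Rightarrow> nat \<Rightarrow> nat" where
  "L_beta q s m = q ^ ((s - 1) * (m - 1)) * ((q ^ m - 1) div (q - 1))"

end

theory Submission
  imports Defs
begin

text \<open>Elements outside the maximal ideal (g) are units, and g^t u \<noteq> 0 for a unit u and t < s.
  The columns of G_n^alpha run through all of R^n, so a linear form with a unit coefficient
  takes every value exactly N^(n-1) times on them, where N = q^s = |R|. Splitting G_k^beta
  into its alpha block and the q^(s-1) copies of G_(k-1)^beta, whose top entries lie in (g),
  an induction on k shows that a coefficient vector with a unit entry yields exactly N^(k-1)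
  unit coordinates. Every nonzero coefficient vector is g^t times one with a unit entry, t < s,
  so every nonzero codeword has weight at least N^(k-1); the first row scaled by g^(s-1)
  attains this bound, because it vanishes on the beta blocks.

  Both hold because the order compares gamma-adic digit strings as base-q numerals.\<close>

lemma sum_lessThan_add:
  fixes a b :: nat
  shows "(\<Sum>c<a + b. f c) = (\<Sum>c<a. f c) + (\<Sum>c<b. f (a + c))"
  by (induction b) (simp_all add: add.assoc)

lemma sum_lessThan_mult:
  fixes a b :: nat
  shows "(\<Sum>c<a * b. f c) = (\<Sum>i<a. \<Sum>j<b. f (i * b + j))"
proof (induction a)
  case 0
  then show ?case by simp
next
  case (Suc a)
  then show ?case
    by (simp only: mult_Suc add.commute[of b] sum_lessThan_add) simp
qed

lemma sum_of_bool_lessThan: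
  fixes n :: nat
  shows "(\<Sum>c<n. of_bool (P c) :: nat) = card {c. c < n \<and> P c}"
proof -
  have "(\<Sum>c<n. of_bool (P c) :: nat) = of_nat (card ({..<n} \<inter> {c. P c}))"
    by (rule sum_of_bool_eq) simp_all
  also have "{..<n} \<inter> {c. P c} = {c. c < n \<and> P c}"
    by auto
  finally show ?thesis
    by simp
qed

section \<open>Ranks and base-q numerals\<close>

lemma sum_digits_less_power:
  fixes q :: nat
  assumes "\<And>i. i < n \<Longrightarrow> d i < q"
  shows "(\<Sum>i<n. d i * q ^ i) < q ^ n"
  using assms
proof (induction n)
  case 0
  then show ?case by simp
next
  case (Suc n)
  then have "(\<Sum>i<Suc n. d i * q ^ i) < q ^ n + d n * q ^ n"
    by simp
  also have "\<dots> \<le> q ^ Suc n"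
    using Suc.prems[of n] mult_le_mono1[of "Suc (d n)" q "q ^ n"] by simp
  finally show ?case .
qed

lemma sum_digits_less_if_top_digit_less:
  fixes q :: nat
  assumes digits: "\<And>i. i < n \<Longrightarrow> d i < q"
    and "m < n" and top: "d m < d' m"
    and above: "\<And>i. m < i \<Longrightarrow> i < n \<Longrightarrow> d i = d' i"
  shows "(\<Sum>i<n. d i * q ^ i) < (\<Sum>i<n. d' i * q ^ i)"
proof -
  have split: "(\<Sum>i<n. f i) = (\<Sum>i<m. f i) + f m + (\<Sum>i=Suc m..<n. f i)" for f :: "nat \<Rightarrow> nat"
    using \<open>m < n\<close> sum.atLeastLessThan_concat[of 0 "Suc m" n f]
    by (simp add: lessThan_atLeast0)
  have "(\<Sum>i=Suc m..<n. d i * q ^ i) = (\<Sum>i=Suc m..<n. d' i * q ^ i)"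
    using above by (intro sum.cong) auto
  moreover have "(\<Sum>i<m. d i * q ^ i) + d m * q ^ m < d' m * q ^ m"
    using sum_digits_less_power[of m d q] digits \<open>m < n\<close> top
      mult_le_mono1[of "Suc (d m)" "d' m" "q ^ m"] by simp
  ultimately show ?thesis
    unfolding split[of "\<lambda>i. d i * q ^ i"] split[of "\<lambda>i. d' i * q ^ i"] by linarith
qed

lemma bij_betw_rank:
  fixes f :: "'a \<Rightarrow> 'b::linorder"
  assumes "finite A" and "inj_on f A"
  shows "bij_betw (\<lambda>x. card {y\<in>A. f y < f x}) A {..<card A}"
proof -
  let ?rank = "\<lambda>x. card {y\<in>A. f y < f x}"
  have rank_less: "?rank x < ?rank y" if "x \<in> A" "f x < f y" for x y
  proof (rule psubset_card_mono)
    show "{z\<in>A. f z < f x} \<subset> {z\<in>A. f z < f y}"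
      using that by auto
  qed (simp add: \<open>finite A\<close>)
  have "inj_on ?rank A"
  proof (rule inj_onI, rule ccontr)
    fix x y assume "x \<in> A" "y \<in> A" "?rank x = ?rank y" "x \<noteq> y"
    then have "f x \<noteq> f y"
      using \<open>inj_on f A\<close> by (auto dest: inj_onD)
    then show False
      using rank_less[of x y] rank_less[of y x] \<open>x \<in> A\<close> \<open>y \<in> A\<close> \<open>?rank x = ?rank y\<close>
      by (auto simp: linorder_neq_iff)
  qed
  moreover have "?rank x < card A" if "x \<in> A" for x
  proof (rule psubset_card_mono)
    show "{y\<in>A. f y < f x} \<subset> A"
      using that by auto
  qed (rule \<open>finite A\<close>)
  then have "?rank ` A \<subseteq> {..<card A}"
    by auto
  ultimately show ?thesis
    by (simp add: bij_betw_def card_image card_subset_eq)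
qed

section \<open>Row spans and generator matrices\<close>

definition row_comb :: "(nat \<Rightarrow> nat \<Rightarrow> 'a::comm_ring_1) \<Rightarrow> nat \<Rightarrow> (nat \<Rightarrow> 'a) \<Rightarrow> nat \<Rightarrow> 'a" where
  "row_comb G k l c = (\<Sum>r<k. l r * G r c)"

lemma row_span_eq: "row_span G k n = {map (row_comb G k l) [0..<n] | l. True}"
  unfolding row_span_def row_comb_def [abs_def] ..

lemma row_comb_zero [simp]: "row_comb G k (\<lambda>r. 0) c = 0"
  by (simp add: row_comb_def)

lemma row_comb_diff: "row_comb G k l c - row_comb G k l' c = row_comb G k (\<lambda>r. l r - l' r) c"
  by (simp add: row_comb_def sum_subtractf left_diff_distrib)

lemma row_comb_cong: "(\<And>r. r < k \<Longrightarrow> l r = l' r) \<Longrightarrow> row_comb G k l c = row_comb G k l' c"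
  by (simp add: row_comb_def)

lemma row_comb_dvd: "(\<And>r. r < k \<Longrightarrow> a dvd l r) \<Longrightarrow> a dvd row_comb G k l c"
  unfolding row_comb_def by (auto intro: dvd_sum)

lemma row_comb_factor:
  assumes "\<And>r. r < k \<Longrightarrow> l r = a * l' r"
  shows "row_comb G k l c = a * row_comb G k l' c"
  unfolding row_comb_def sum_distrib_left using assms by (simp add: mult.assoc)

definition codeword_weight :: "(nat \<Rightarrow> nat \<Rightarrow> 'a::comm_ring_1) \<Rightarrow> nat \<Rightarrow> nat \<Rightarrow> (nat \<Rightarrow> 'a) \<Rightarrow> nat" where
  "codeword_weight G k n l = card {c. c < n \<and> row_comb G k l c \<noteq> 0}"

lemma hamming_map: "hamming (map f [0..<n]) (map h [0..<n]) = card {c. c < n \<and> f c \<noteq> h c}"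
  unfolding hamming_def by (rule arg_cong[where f = card]) auto

lemma hamming_le_length: "hamming x y \<le> length x"
  unfolding hamming_def by (rule order.trans[OF card_mono[of "{..<length x}"]]) auto

lemma min_dist_row_span_eqI:
  assumes lower: "\<And>l. \<exists>c<n. row_comb G k l c \<noteq> 0 \<Longrightarrow> d \<le> codeword_weight G k n l"
    and attained: "codeword_weight G k n l\<^sub>0 = d" and "0 < d"
  shows "min_dist (row_span G k n) = d"
proof -
  let ?C = "row_span G k n"
  let ?H = "{hamming x y | x y. x \<in> ?C \<and> y \<in> ?C \<and> x \<noteq> y}"
  have "?H \<subseteq> {..n}"
  proof
    fix h assume "h \<in> ?H"
    then obtain l y where "h = hamming (map (row_comb G k l) [0..<n]) y"
      by (auto simp: row_span_eq)
    then show "h \<in> {..n}"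
      using hamming_le_length[of "map (row_comb G k l) [0..<n]" y] by simp
  qed
  then have "finite ?H"
    by (rule finite_subset) simp
  moreover have "d \<le> h" if "h \<in> ?H" for h
  proof -
    obtain l l' where "map (row_comb G k l) [0..<n] \<noteq> map (row_comb G k l') [0..<n]"
      and h: "h = card {c. c < n \<and> row_comb G k l c \<noteq> row_comb G k l' c}"
      using \<open>h \<in> ?H\<close> by (auto simp: row_span_eq hamming_map)
    have diff: "row_comb G k (\<lambda>r. l r - l' r) c \<noteq> 0 \<longleftrightarrow> row_comb G k l c \<noteq> row_comb G k l' c"
      for c by (simp flip: row_comb_diff)
    then have "\<exists>c<n. row_comb G k (\<lambda>r. l r - l' r) c \<noteq> 0"
      using \<open>map (row_comb G k l) [0..<n] \<noteq> _\<close> by (auto simp: list_eq_iff_nth_eq)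
    then have "d \<le> codeword_weight G k n (\<lambda>r. l r - l' r)"
      by (rule lower)
    then show ?thesis
      unfolding h codeword_weight_def diff .
  qed
  moreover have "d \<in> ?H"
  proof -
    let ?x = "map (row_comb G k l\<^sub>0) [0..<n]" and ?y = "map (row_comb G k (\<lambda>r. 0)) [0..<n]"
    have "hamming ?x ?y = d"
      using attained by (simp add: hamming_map codeword_weight_def)
    moreover have "?x \<noteq> ?y"
    proof
      assume "?x = ?y"
      then have "hamming ?x ?y = 0"
        unfolding hamming_def by simp
      with \<open>hamming ?x ?y = d\<close> \<open>0 < d\<close> show False
        by simp
    qed
    moreover have "?x \<in> ?C" "?y \<in> ?C"
      unfolding row_span_eq by blast+
    ultimately show ?thesis
      by blast
  qed
  ultimately show ?thesis
    unfolding min_dist_def by (intro Min_eqI)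
qed

lemma card_unit_mult_eq:
  fixes u :: "'a::comm_ring_1"
  assumes "u dvd 1"
  shows "card {x. u * x = w} = 1"
proof -
  obtain v where v: "u * v = 1"
    using assms by (metis dvdE)
  have "u * x = w \<longleftrightarrow> x = v * w" for x
    by (metis v mult.assoc mult.commute mult_1_left)
  then show ?thesis by simp
qed

lemma row_comb_Galpha_Suc:
  assumes "1 \<le> n"
  shows "row_comb (Galpha rh N (Suc n)) (Suc n) m c
    = m 0 * rh (c div N ^ n) + row_comb (Galpha rh N n) n (\<lambda>r. m (Suc r)) (c mod N ^ n)"
  using assms by (cases n) (simp_all add: row_comb_def sum.lessThan_Suc_shift del: sum.lessThan_Suc)

lemma Galpha_fiber_count:
  fixes rh :: "nat \<Rightarrow> 'a::{comm_ring_1,finite}"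
  assumes rh: "bij_betw rh {..<N} UNIV"
    and "1 \<le> n" and "\<exists>r<n. m r dvd 1"
  shows "(\<Sum>c<N ^ n. of_bool (row_comb (Galpha rh N n) n m c = z) :: nat) = N ^ (n - 1)"
  using assms(2,3)
proof (induction n arbitrary: m z rule: nat_induct_at_least)
  case base
  then have "m 0 dvd 1"
    by auto
  have "(\<Sum>c<N. of_bool (m 0 * rh c = z) :: nat) = (\<Sum>x\<in>UNIV. of_bool (m 0 * x = z))"
    by (rule sum.reindex_bij_betw[OF rh])
  also have "\<dots> = 1"
    using card_unit_mult_eq[OF \<open>m 0 dvd 1\<close>] by simp
  finally show ?case
    by (simp add: row_comb_def)
next
  case (Suc n)
  let ?tail = "row_comb (Galpha rh N n) n (\<lambda>r. m (Suc r))"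
  have card_R: "card (UNIV :: 'a set) = N"
    using bij_betw_same_card[OF rh] by simp
  then have "0 < N"
    by (metis finite_UNIV_card_ge_0 finite_class.finite_UNIV)
  have "(\<Sum>c<N ^ Suc n. of_bool (row_comb (Galpha rh N (Suc n)) (Suc n) m c = z) :: nat)
      = (\<Sum>a<N. \<Sum>b<N ^ n. of_bool (m 0 * rh a + ?tail b = z))"
    unfolding power_Suc sum_lessThan_mult
    using \<open>0 < N\<close> by (intro sum.cong refl) (simp add: row_comb_Galpha_Suc[OF \<open>1 \<le> n\<close>])
  also have "\<dots> = (\<Sum>x\<in>UNIV. \<Sum>b<N ^ n. of_bool (m 0 * x + ?tail b = z))"
    by (rule sum.reindex_bij_betw[OF rh])
  also have "\<dots> = N ^ n"
  proof (cases "\<exists>r<n. m (Suc r) dvd 1")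
    case True
    have "m 0 * x + ?tail b = z \<longleftrightarrow> ?tail b = z - m 0 * x" for x b
      by (auto simp: algebra_simps)
    then have "(\<Sum>b<N ^ n. of_bool (m 0 * x + ?tail b = z) :: nat) = N ^ (n - 1)" for x
      using Suc.IH[OF True, of "z - m 0 * x"] by simp
    then show ?thesis
      using card_R \<open>1 \<le> n\<close> by (simp add: power_eq_if)
  next
    case False
    then have "m 0 dvd 1"
      using Suc.prems by (auto simp: less_Suc_eq_0_disj)
    have "(\<Sum>x\<in>UNIV. \<Sum>b<N ^ n. of_bool (m 0 * x + ?tail b = z) :: nat)
        = (\<Sum>b<N ^ n. \<Sum>x\<in>UNIV. of_bool (m 0 * x = z - ?tail b))"
      by (subst sum.swap) (simp only: eq_diff_eq)
    also have "\<dots> = N ^ n"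
      using card_unit_mult_eq[OF \<open>m 0 dvd 1\<close>] by simp
    finally show ?thesis .
  qed
  finally show ?case
    by simp
qed

lemma Galpha_preimage_count:
  fixes rh :: "nat \<Rightarrow> 'a::{comm_ring_1,finite}"
  assumes "bij_betw rh {..<N} UNIV" and "1 \<le> n" and "\<exists>r<n. m r dvd 1"
  shows "(\<Sum>c<N ^ n. of_bool (row_comb (Galpha rh N n) n m c \<in> S) :: nat) = card S * N ^ (n - 1)"
proof -
  have "(\<Sum>c<N ^ n. of_bool (row_comb (Galpha rh N n) n m c \<in> S) :: nat)
      = (\<Sum>c<N ^ n. \<Sum>z\<in>S. of_bool (row_comb (Galpha rh N n) n m c = z))"
    by (intro sum.cong refl) (simp add: of_bool_def)
  also have "\<dots> = (\<Sum>z\<in>S. \<Sum>c<N ^ n. of_bool (row_comb (Galpha rh N n) n m c = z))"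
    by (rule sum.swap)
  also have "\<dots> = card S * N ^ (n - 1)"
    using Galpha_fiber_count[OF assms] by simp
  finally show ?thesis .
qed

lemma nbeta_Suc: "1 \<le> K \<Longrightarrow> nbeta N M (Suc K) = N ^ K + M * nbeta N M K"
  by (cases K) auto

lemma sum_nbeta_Suc:
  "1 \<le> K \<Longrightarrow> (\<Sum>c<nbeta N M (Suc K). f c)
     = (\<Sum>c<N ^ K. f c) + (\<Sum>j<M. \<Sum>w<nbeta N M K. f (N ^ K + (j * nbeta N M K + w)))"
  by (simp only: nbeta_Suc sum_lessThan_add sum_lessThan_mult)

lemma row_comb_Gbeta_alpha_block:
  assumes "1 \<le> K" and "c < N ^ K"
  shows "row_comb (Gbeta rh ag N M (Suc K)) (Suc K) l c
    = l 0 + row_comb (Galpha rh N K) K (\<lambda>r. l (Suc r)) c"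
  using assms by (cases K) (simp_all add: row_comb_def sum.lessThan_Suc_shift del: sum.lessThan_Suc)

lemma row_comb_Gbeta_beta_block:
  assumes "1 \<le> K" and "w < nbeta N M K"
  shows "row_comb (Gbeta rh ag N M (Suc K)) (Suc K) l (N ^ K + (j * nbeta N M K + w))
    = l 0 * ag j + row_comb (Gbeta rh ag N M K) K (\<lambda>r. l (Suc r)) w"
proof -
  have "(j * nbeta N M K + w) div nbeta N M K = j" "(j * nbeta N M K + w) mod nbeta N M K = w"
    using assms(2) by auto
  moreover obtain K' where "K = Suc K'"
    using assms(1) by (cases K) auto
  ultimately show ?thesis
    unfolding row_comb_def sum.lessThan_Suc_shift by (simp add: Let_def)
qed

section \<open>The lengths L_beta\<close>

lemma geometric_quotient_Suc:
  fixes q :: nat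
  assumes "2 \<le> q"
  shows "(q ^ Suc m - 1) div (q - 1) = q ^ m + (q ^ m - 1) div (q - 1)"
proof -
  have "1 \<le> q ^ m"
    using assms by simp
  then have "q ^ Suc m - 1 = (q ^ m - 1) + q ^ m * (q - 1)"
    using assms by (simp add: algebra_simps diff_mult_distrib2)
  also have "\<dots> div (q - 1) = q ^ m + (q ^ m - 1) div (q - 1)"
    using assms by (intro div_mult_self1) simp
  finally show ?thesis .
qed

lemma L_beta_diff:
  assumes "2 \<le> q" and "1 \<le> s" and "2 \<le> k"
  shows "L_beta q s k - q ^ (s - 1) * L_beta q s (k - 1) = q ^ (s * (k - 1))"
proof -
  obtain m where k: "k = Suc (Suc m)"
    using assms(3) by (metis add_2_eq_Suc le_Suc_ex)
  let ?Q = "(q ^ Suc m - 1) div (q - 1)"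
  have "L_beta q s k = q ^ ((s - 1) * Suc m) * (q ^ Suc m + ?Q)"
    using geometric_quotient_Suc[OF assms(1), of "Suc m"] by (simp add: L_beta_def k)
  moreover have "q ^ (s - 1) * L_beta q s (k - 1) = q ^ ((s - 1) * Suc m) * ?Q"
    by (simp add: L_beta_def k power_add)
  ultimately have "L_beta q s k - q ^ (s - 1) * L_beta q s (k - 1) = q ^ ((s - 1) * Suc m) * q ^ Suc m"
    by (simp add: add_mult_distrib2)
  also have "\<dots> = q ^ ((s - 1) * Suc m + Suc m)"
    by (simp only: power_add)
  also have "(s - 1) * Suc m + Suc m = s * (k - 1)"
    using assms(2) k by (cases s) auto
  finally show ?thesis .
qed

section \<open>Nilpotent principal maximal ideals\<close>

lemma principal_ideal_eq: "principal_ideal g = {x. g dvd x}"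
  unfolding principal_ideal_def dvd_def by (auto simp: mult.commute)

locale nilpotent_maximal_ideal =
  fixes g :: "'a::comm_ring_1" and s :: nat
  assumes maximal: "maximal_ideal (principal_ideal g)"
    and pow_s_eq_0: "g ^ s = 0" and pow_pred_s_neq_0: "g ^ (s - 1) \<noteq> 0"
begin

lemma not_dvd_one: "\<not> g dvd 1"
proof
  assume "g dvd 1"
  then have "principal_ideal g = UNIV"
    by (auto simp: principal_ideal_eq intro: dvd_trans)
  with maximal show False
    by (simp add: maximal_ideal_def)
qed

lemma s_pos: "0 < s"
  using pow_s_eq_0 not_dvd_one by (cases s) auto

lemma unit_if_not_dvd:
  assumes "\<not> g dvd x"
  shows "x dvd 1"
proof -
  define J where "J = {a * x + b * g | a b. True}"
  have "is_ideal J"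
    unfolding is_ideal_def
  proof (intro conjI ballI allI)
    have "0 = 0 * x + 0 * g"
      by simp
    then show "0 \<in> J"
      unfolding J_def by blast
  next
    fix u v assume "u \<in> J" "v \<in> J"
    then obtain a b a' b' where "u = a * x + b * g" "v = a' * x + b' * g"
      unfolding J_def by blast
    then have "u + v = (a + a') * x + (b + b') * g"
      by (simp add: algebra_simps)
    then show "u + v \<in> J"
      unfolding J_def by blast
  next
    fix r u assume "u \<in> J"
    then obtain a b where "u = a * x + b * g"
      unfolding J_def by blast
    then have "r * u = (r * a) * x + (r * b) * g"
      by (simp add: algebra_simps)
    then show "r * u \<in> J"
      unfolding J_def by blast
  qed
  moreover have "r * g = 0 * x + r * g" "x = 1 * x + 0 * g" for r
    by simp_all
  then have "principal_ideal g \<subseteq> J" "x \<in> J"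
    unfolding J_def principal_ideal_def by blast+
  moreover have "x \<notin> principal_ideal g"
    using assms by (simp add: principal_ideal_eq)
  ultimately have "1 \<in> J"
    using maximal unfolding maximal_ideal_def by blast
  then obtain a b where ab: "a * x + b * g = 1"
    unfolding J_def by auto
  have "(1 - b * g) * (\<Sum>i<s. (b * g) ^ i) = 1"
    using one_diff_power_eq[of "b * g" s] pow_s_eq_0 by (simp add: power_mult_distrib)
  moreover have "a * x = 1 - b * g"
    using ab by (simp add: eq_diff_eq)
  ultimately have "x * (a * (\<Sum>i<s. (b * g) ^ i)) = 1"
    by (metis mult.assoc mult.commute)
  then show ?thesis
    by (metis dvdI)
qed

lemma pow_mult_neq_0:
  assumes "\<not> g dvd u" and "t < s"
  shows "g ^ t * u \<noteq> 0"
proof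
  assume "g ^ t * u = 0"
  obtain v where "u * v = 1"
    using unit_if_not_dvd[OF assms(1)] by (metis dvdE)
  then have "g ^ t = 0"
    using \<open>g ^ t * u = 0\<close> by (metis mult.assoc mult_1_right mult_zero_left)
  moreover have "g ^ (s - 1) = g ^ t * g ^ (s - 1 - t)"
    using assms(2) by (simp flip: power_add)
  ultimately show False
    using pow_pred_s_neq_0 by simp
qed

lemma dvd_if_pow_Suc_dvd:
  assumes "n < s" and "g ^ Suc n dvd r * g ^ n"
  shows "g dvd r"
proof (rule ccontr)
  assume "\<not> g dvd r"
  obtain t where "r * g ^ n = g ^ Suc n * t"
    using assms(2) by (metis dvdE)
  then have "g ^ n * (r - g * t) = 0"
    by (simp add: algebra_simps)
  moreover have "\<not> g dvd r - g * t"
    using \<open>\<not> g dvd r\<close> by (metis diff_add_cancel dvd_add dvd_triv_left)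
  ultimately show False
    using pow_mult_neq_0 assms(1) by blast
qed

lemma pow_pred_s_mult_eq_0:
  assumes "g dvd a"
  shows "g ^ (s - 1) * a = 0"
proof -
  obtain v where "a = g * v"
    using assms by (rule dvdE)
  then have "g ^ (s - 1) * a = (g ^ (s - 1) * g) * v"
    by (simp add: mult.assoc)
  also have "g ^ (s - 1) * g = g ^ s"
    using s_pos by (simp flip: power_Suc2)
  finally show ?thesis
    using pow_s_eq_0 by simp
qed

lemma factor_out_pow:
  assumes "\<exists>r<k. l r \<noteq> 0"
  obtains t l' where "t < s" and "\<And>r. r < k \<Longrightarrow> l r = g ^ t * l' r"
    and "\<exists>r<k. \<not> g dvd l' r"
proof -
  let ?P = "\<lambda>t. \<not> (\<forall>r<k. g ^ t dvd l r)"
  have "?P s"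
    using assms pow_s_eq_0 by auto
  then obtain t0 where "?P t0" and least: "\<And>t. t < t0 \<Longrightarrow> \<not> ?P t"
    using exists_least_iff[of ?P] by blast
  then obtain t where t0: "t0 = Suc t"
    by (cases t0) auto
  have "\<not> s < t0"
    using least \<open>?P s\<close> by blast
  then have "t < s"
    using t0 by simp
  have "\<forall>r<k. g ^ t dvd l r"
    using least[of t] t0 by simp
  define l' where "l' r = (SOME w. l r = g ^ t * w)" for r
  have l': "l r = g ^ t * l' r" if "r < k" for r
    unfolding l'_def by (rule someI_ex) (use \<open>\<forall>r<k. g ^ t dvd l r\<close> that in auto)
  moreover have "\<exists>r<k. \<not> g dvd l' r"
  proof (rule ccontr)
    assume "\<not> (\<exists>r<k. \<not> g dvd l' r)"
    then have "\<forall>r<k. g ^ Suc t dvd l r"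
      using l' by (auto intro: mult_dvd_mono simp: mult.commute[of g])
    with \<open>?P t0\<close> show False
      unfolding t0 by blast
  qed
  ultimately show ?thesis
    using \<open>t < s\<close> that by blast
qed

end

locale gamma_adic_ring = nilpotent_maximal_ideal g s
  for g :: "'a::{comm_ring_1,finite}" and s :: nat +
  fixes q :: nat and e :: "nat \<Rightarrow> 'a"
  assumes representatives: "\<forall>x. \<exists>!i. i < q \<and> x - e i \<in> principal_ideal g"
begin

lemma representative_dvd: "\<exists>!i. i < q \<and> g dvd x - e i"
  using representatives by (simp add: principal_ideal_eq)

lemma representative_decomp:
  obtains i t where "i < q" and "x = e i + g * t"
proof -
  obtain i where "i < q" and "g dvd x - e i"
    using representative_dvd[of x] by blast
  from \<open>g dvd x - e i\<close> obtain t where "x - e i = g * t"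
    by (rule dvdE)
  then have "x = e i + g * t"
    by (simp add: diff_eq_eq add.commute)
  with \<open>i < q\<close> show ?thesis
    by (rule that)
qed

lemma representative_inj: "i < q \<Longrightarrow> j < q \<Longrightarrow> g dvd e i - e j \<Longrightarrow> i = j"
  using representative_dvd[of "e i"] by auto

lemma q_ge_2: "2 \<le> q"
proof -
  obtain i j where "i < q" "g dvd 0 - e i" "j < q" "g dvd 1 - e j"
    using representative_dvd[of 0] representative_dvd[of 1] by blast
  moreover have "i \<noteq> j"
  proof
    assume "i = j"
    with \<open>g dvd 0 - e i\<close> have "g dvd e j"
      by simp
    with \<open>g dvd 1 - e j\<close> have "g dvd (1 - e j) + e j"
      by (rule dvd_add)
    with not_dvd_one show False
      by simp
  qed
  ultimately show ?thesis
    by arith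
qed

lemma card_multiples_pow_Suc:
  assumes "j < s"
  shows "card {x. g ^ j dvd x} = q * card {x. g ^ Suc j dvd x}"
proof -
  let ?f = "\<lambda>(i, y). e i * g ^ j + y"
  have "bij_betw ?f ({..<q} \<times> {y. g ^ Suc j dvd y}) {x. g ^ j dvd x}"
  proof (rule bij_betwI')
    fix a b assume "a \<in> {..<q} \<times> {y. g ^ Suc j dvd y}" "b \<in> {..<q} \<times> {y. g ^ Suc j dvd y}"
    then obtain i y i' y' where ab: "a = (i, y)" "b = (i', y')" "i < q" "i' < q"
      and "g ^ Suc j dvd y" "g ^ Suc j dvd y'"
      by auto
    show "?f a = ?f b \<longleftrightarrow> a = b"
    proof
      assume eq: "?f a = ?f b"
      then have "(e i - e i') * g ^ j = y' - y"
        using ab by (simp add: algebra_simps)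
      then have "g ^ Suc j dvd (e i - e i') * g ^ j"
        using \<open>g ^ Suc j dvd y\<close> \<open>g ^ Suc j dvd y'\<close> by simp
      then have "i = i'"
        using dvd_if_pow_Suc_dvd assms representative_inj ab by blast
      then show "a = b"
        using eq ab by simp
    qed simp
  next
    fix a assume "a \<in> {..<q} \<times> {y. g ^ Suc j dvd y}"
    then show "?f a \<in> {x. g ^ j dvd x}"
      by (auto intro: dvd_add dvd_trans[of _ "g ^ Suc j"])
  next
    fix x assume "x \<in> {x. g ^ j dvd x}"
    then obtain r where r: "x = g ^ j * r"
      by auto
    obtain i t where "i < q" and "r = e i + g * t"
      by (rule representative_decomp)
    then have "x = ?f (i, g ^ Suc j * t)"
      using r by (simp add: algebra_simps)
    then show "\<exists>a\<in>{..<q} \<times> {y. g ^ Suc j dvd y}. x = ?f a"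
      using \<open>i < q\<close> by (intro bexI[of _ "(i, g ^ Suc j * t)"]) auto
  qed
  then have "card ({..<q} \<times> {y. g ^ Suc j dvd y}) = card {x. g ^ j dvd x}"
    by (rule bij_betw_same_card)
  then show ?thesis
    by (simp add: card_cartesian_product)
qed

lemma card_multiples_pow: "j \<le> s \<Longrightarrow> card {x. g ^ j dvd x} = q ^ (s - j)"
proof (induction "s - j" arbitrary: j)
  case 0
  then have "{x. g ^ j dvd x} = {0}"
    using pow_s_eq_0 by auto
  then show ?case
    using 0 by simp
next
  case (Suc m)
  then show ?case
    using card_multiples_pow_Suc[of j] by (simp add: Suc_diff_Suc flip: power_Suc)
qed

lemma card_UNIV_eq: "card (UNIV :: 'a set) = q ^ s"
  using card_multiples_pow[of 0] by simp

lemma card_multiples: "card {x. g dvd x} = q ^ (s - 1)"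
  using card_multiples_pow[of 1] s_pos by simp

lemma card_non_multiples: "card {x. \<not> g dvd x} = q ^ s - q ^ (s - 1)"
  using card_Diff_subset[of "{x. g dvd x}" UNIV] card_UNIV_eq card_multiples
  by (simp add: Compl_eq_Diff_UNIV[symmetric] Collect_neg_eq)

section \<open>Digits and the order on R\<close>

definition is_expansion :: "'a \<Rightarrow> (nat \<Rightarrow> nat) \<Rightarrow> bool" where
  "is_expansion x d \<longleftrightarrow> (\<forall>i. d i < q) \<and> (\<forall>i. s \<le> i \<longrightarrow> d i = 0) \<and> x = (\<Sum>i<s. e (d i) * g ^ i)"

lemma partial_expansion_exists: "\<exists>d y. (\<forall>i. d i < q) \<and> x = (\<Sum>i<n. e (d i) * g ^ i) + g ^ n * y"
proof (induction n)
  case 0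
  show ?case
    using q_ge_2 by (intro exI[of _ "\<lambda>_. 0"] exI[of _ x]) auto
next
  case (Suc n)
  then obtain d y where d: "\<forall>i. d i < q" and x: "x = (\<Sum>i<n. e (d i) * g ^ i) + g ^ n * y"
    by blast
  obtain i t where "i < q" and y: "y = e i + g * t"
    by (rule representative_decomp)
  have "x = (\<Sum>j<Suc n. e ((d(n := i)) j) * g ^ j) + g ^ Suc n * t"
    using x y by (simp add: algebra_simps)
  moreover have "\<forall>j. (d(n := i)) j < q"
    using d \<open>i < q\<close> by simp
  ultimately show ?case
    by blast
qed

lemma expansion_exists: "\<exists>d. is_expansion x d"
proof -
  obtain d y where "\<forall>i. d i < q" and x: "x = (\<Sum>i<s. e (d i) * g ^ i) + g ^ s * y"
    using partial_expansion_exists by blast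
  then have "is_expansion x (\<lambda>i. if i < s then d i else 0)"
    using q_ge_2 pow_s_eq_0 unfolding is_expansion_def by auto
  then show ?thesis
    by blast
qed

lemma partial_expansion_unique:
  assumes "n \<le> s" and "\<forall>i. d i < q" and "\<forall>i. d' i < q"
    and "g ^ n dvd (\<Sum>i<n. e (d i) * g ^ i) - (\<Sum>i<n. e (d' i) * g ^ i)"
  shows "\<forall>i<n. d i = d' i"
  using assms
proof (induction n)
  case 0
  then show ?case by simp
next
  case (Suc n)
  define A where "A = (\<Sum>i<n. e (d i) * g ^ i) - (\<Sum>i<n. e (d' i) * g ^ i)"
  define B where "B = (e (d n) - e (d' n)) * g ^ n"
  have "(\<Sum>i<Suc n. e (d i) * g ^ i) - (\<Sum>i<Suc n. e (d' i) * g ^ i) = A + B"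
    unfolding A_def B_def sum.lessThan_Suc by (simp add: algebra_simps)
  with Suc.prems(4) have "g ^ Suc n dvd A + B"
    by simp
  then have "g ^ n dvd A + B"
    by (rule dvd_trans[rotated]) simp
  then have "g ^ n dvd A"
    by (simp add: B_def dvd_add_left_iff)
  then have below: "\<forall>i<n. d i = d' i"
    unfolding A_def using Suc.prems(1-3) by (intro Suc.IH) simp_all
  then have "(\<Sum>i<n. e (d i) * g ^ i) = (\<Sum>i<n. e (d' i) * g ^ i)"
    by (intro sum.cong) simp_all
  then have "A = 0"
    by (simp add: A_def)
  then have "g dvd e (d n) - e (d' n)"
    using \<open>g ^ Suc n dvd A + B\<close> Suc.prems(1) by (intro dvd_if_pow_Suc_dvd[of n]) (simp_all add: B_def)
  then have "d n = d' n"
    using representative_inj Suc.prems(2,3) by blast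
  with below show ?case
    by (simp add: less_Suc_eq)
qed

lemma expansion_unique:
  assumes "is_expansion x d" and "is_expansion x d'"
  shows "d = d'"
proof
  fix i
  have "\<forall>i<s. d i = d' i"
    using assms partial_expansion_unique[of s d d'] unfolding is_expansion_def by auto
  then show "d i = d' i"
    using assms unfolding is_expansion_def by (cases "i < s") auto
qed

abbreviation digit :: "'a \<Rightarrow> nat \<Rightarrow> nat" where
  "digit \<equiv> digits g s q e"

lemma digits_is_expansion: "is_expansion x (digit x)"
proof -
  have "\<exists>!d. is_expansion x d"
    using expansion_exists expansion_unique by blast
  then show ?thesis
    unfolding digits_def is_expansion_def[symmetric] by (rule theI')
qed

lemma digit_less: "digit x i < q"
  using digits_is_expansion by (simp add: is_expansion_def)

lemma digit_eq_0: "s \<le> i \<Longrightarrow> digit x i = 0"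
  using digits_is_expansion by (simp add: is_expansion_def)

lemma digit_inj: "digit x = digit y \<Longrightarrow> x = y"
  using digits_is_expansion[of x] digits_is_expansion[of y] by (simp add: is_expansion_def)

definition digit_number :: "'a \<Rightarrow> nat" where
  "digit_number x = (\<Sum>i<s. digit x i * q ^ i)"

lemma top_digit_difference:
  assumes "x \<noteq> y"
  obtains m where "m < s" and "digit x m \<noteq> digit y m"
    and "\<And>j. m < j \<Longrightarrow> digit x j = digit y j"
    and "(GREATEST i. digit x i \<noteq> digit y i) = m"
proof -
  let ?D = "\<lambda>i. digit x i \<noteq> digit y i"
  have bound: "i < s" if "?D i" for i
  proof (rule ccontr)
    assume "\<not> i < s"
    then show False
      using that digit_eq_0[of i x] digit_eq_0[of i y] by simp
  qed
  then have bound': "i \<le> s" if "?D i" for i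
    using that by (simp add: less_imp_le)
  obtain i where "?D i"
    using assms digit_inj by blast
  define m where "m = Greatest ?D"
  have "?D m"
    unfolding m_def using GreatestI_nat[of ?D i s] \<open>?D i\<close> bound' by blast
  moreover have "j \<le> m" if "?D j" for j
    unfolding m_def using Greatest_le_nat[of ?D j s] that bound' by blast
  ultimately show ?thesis
    using bound by (intro that[of m]) (auto simp: m_def not_le[symmetric])
qed

lemma digit_number_less:
  assumes "m < s" and "digit x m < digit y m" and "\<And>j. m < j \<Longrightarrow> digit x j = digit y j"
  shows "digit_number x < digit_number y"
  unfolding digit_number_def
  using assms digit_less by (intro sum_digits_less_if_top_digit_less) auto

lemma digit_number_less_iff:
  assumes "m < s" and "digit x m \<noteq> digit y m" and above: "\<And>j. m < j \<Longrightarrow> digit x j = digit y j"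
  shows "digit_number x < digit_number y \<longleftrightarrow> digit x m < digit y m"
proof
  assume "digit x m < digit y m"
  then show "digit_number x < digit_number y"
    by (rule digit_number_less[OF assms(1) _ above])
next
  assume "digit_number x < digit_number y"
  have above': "digit y j = digit x j" if "m < j" for j
    using above[OF that] by (rule sym)
  show "digit x m < digit y m"
  proof (rule ccontr)
    assume "\<not> digit x m < digit y m"
    then have "digit y m < digit x m"
      using assms(2) by simp
    then have "digit_number y < digit_number x"
      by (rule digit_number_less[OF assms(1) _ above'])
    with \<open>digit_number x < digit_number y\<close> show False
      by simp
  qed
qed

lemma ring_less_iff: "ring_less g s q e x y \<longleftrightarrow> digit_number x < digit_number y"
proof (cases "x = y")
  case False
  then obtain m where top: "m < s" "digit x m \<noteq> digit y m"
    "\<And>j. m < j \<Longrightarrow> digit x j = digit y j"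
    and greatest: "(GREATEST i. digit x i \<noteq> digit y i) = m"
    using top_digit_difference by blast
  have "ring_less g s q e x y \<longleftrightarrow> digit x m < digit y m"
    unfolding ring_less_def Let_def greatest using False by simp
  also have "\<dots> \<longleftrightarrow> digit_number x < digit_number y"
    using digit_number_less_iff[OF top] by simp
  finally show ?thesis .
qed (simp add: ring_less_def)

lemma inj_digit_number: "inj digit_number"
proof (rule injI, rule ccontr)
  fix x y assume "digit_number x = digit_number y" "x \<noteq> y"
  moreover obtain m where "m < s" and "digit x m \<noteq> digit y m"
    and "\<And>j. m < j \<Longrightarrow> digit x j = digit y j"
    using top_digit_difference[OF \<open>x \<noteq> y\<close>] by blast
  ultimately show False
    using digit_number_less_iff[of m x y] digit_number_less_iff[of m y x] by auto
qed

lemma bij_betw_ring_rank: "bij_betw (\<lambda>x. card {y\<in>A. ring_less g s q e y x}) A {..<card A}"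
  using bij_betw_rank[of A digit_number] inj_on_subset[OF inj_digit_number]
  by (simp add: ring_less_iff)

lemma rho_bij: "bij_betw (rho g s q e) {..<q ^ s} UNIV"
proof -
  have "rho g s q e = the_inv_into UNIV (\<lambda>x. card {y\<in>UNIV. ring_less g s q e y x})"
    by (simp add: rho_def the_inv_into_def fun_eq_iff)
  then show ?thesis
    using bij_betw_the_inv_into[OF bij_betw_ring_rank[of UNIV]] card_UNIV_eq by simp
qed

lemma agam_dvd:
  assumes "j < q ^ (s - 1)"
  shows "g dvd agam g s q e j"
proof -
  let ?I = "principal_ideal g"
  have "card ?I = q ^ (s - 1)"
    by (simp add: principal_ideal_eq card_multiples)
  then have "the_inv_into ?I (\<lambda>x. card {y\<in>?I. ring_less g s q e y x}) j \<in> ?I"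
    using bij_betw_apply[OF bij_betw_the_inv_into[OF bij_betw_ring_rank[of ?I]]] assms by simp
  then have "agam g s q e j \<in> ?I"
    by (simp add: agam_def the_inv_into_def)
  then show ?thesis
    by (simp add: principal_ideal_eq)
qed

section \<open>Weights in S_k^beta\<close>

abbreviation "G_alpha \<equiv> Galpha (rho g s q e) (q ^ s)"
abbreviation "G_beta \<equiv> Gbeta (rho g s q e) (agam g s q e) (q ^ s) (q ^ (s - 1))"
abbreviation "n_beta \<equiv> nbeta (q ^ s) (q ^ (s - 1))"

lemma card_translated_non_multiples: "card {z. \<not> g dvd a + z} = q ^ s - q ^ (s - 1)"
proof -
  have "bij_betw (\<lambda>z. a + z) {z. \<not> g dvd a + z} {x. \<not> g dvd x}"
    by (rule bij_betw_byWitness[where f' = "\<lambda>x. x - a"]) auto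
  then have "card {z. \<not> g dvd a + z} = card {x. \<not> g dvd x}"
    by (rule bij_betw_same_card)
  then show ?thesis
    using card_non_multiples by simp
qed

lemma alpha_block_non_multiples:
  assumes "1 \<le> K"
  shows "(\<Sum>c<(q ^ s) ^ K. of_bool (\<not> g dvd row_comb (G_beta (Suc K)) (Suc K) l c) :: nat)
    = (\<Sum>c<(q ^ s) ^ K. of_bool (row_comb (G_alpha K) K (\<lambda>r. l (Suc r)) c \<in> {z. \<not> g dvd l 0 + z}))"
  by (intro sum.cong refl) (simp only: lessThan_iff mem_Collect_eq row_comb_Gbeta_alpha_block[OF assms])

lemma beta_blocks_non_multiples:
  assumes "1 \<le> K"
  shows "(\<Sum>j<q ^ (s - 1). \<Sum>w<n_beta K.
      of_bool (\<not> g dvd row_comb (G_beta (Suc K)) (Suc K) l ((q ^ s) ^ K + (j * n_beta K + w))) :: nat)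
    = q ^ (s - 1) * (\<Sum>w<n_beta K. of_bool (\<not> g dvd row_comb (G_beta K) K (\<lambda>r. l (Suc r)) w))"
proof -
  have multiple: "g dvd l 0 * agam g s q e j" if "j < q ^ (s - 1)" for j
    using agam_dvd[OF that] by (rule dvd_mult)
  have "(\<Sum>j<q ^ (s - 1). \<Sum>w<n_beta K.
      of_bool (\<not> g dvd row_comb (G_beta (Suc K)) (Suc K) l ((q ^ s) ^ K + (j * n_beta K + w))) :: nat)
    = (\<Sum>j<q ^ (s - 1). \<Sum>w<n_beta K. of_bool (\<not> g dvd row_comb (G_beta K) K (\<lambda>r. l (Suc r)) w))"
    by (intro sum.cong refl)
      (simp only: lessThan_iff row_comb_Gbeta_beta_block[OF assms] dvd_add_right_iff[OF multiple])
  then show ?thesis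
    by simp
qed

lemma non_multiple_coordinates_count:
  assumes "1 \<le> k" and "\<exists>r<k. \<not> g dvd l r"
  shows "(\<Sum>c<n_beta k. of_bool (\<not> g dvd row_comb (G_beta k) k l c) :: nat) = (q ^ s) ^ (k - 1)"
  using assms
proof (induction k arbitrary: l rule: nat_induct_at_least)
  case base
  then show ?case
    by (simp add: row_comb_def)
next
  case (Suc K)
  let ?tail = "\<lambda>r. l (Suc r)"
  let ?A = "\<Sum>c<(q ^ s) ^ K. of_bool (row_comb (G_alpha K) K ?tail c \<in> {z. \<not> g dvd l 0 + z}) :: nat"
  let ?B = "\<Sum>w<n_beta K. of_bool (\<not> g dvd row_comb (G_beta K) K ?tail w) :: nat"
  have "(\<Sum>c<n_beta (Suc K). of_bool (\<not> g dvd row_comb (G_beta (Suc K)) (Suc K) l c) :: nat)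
      = ?A + q ^ (s - 1) * ?B"
    unfolding sum_nbeta_Suc[OF \<open>1 \<le> K\<close>] alpha_block_non_multiples[OF \<open>1 \<le> K\<close>]
      beta_blocks_non_multiples[OF \<open>1 \<le> K\<close>] ..
  also have "\<dots> = (q ^ s) ^ K"
  proof (cases "\<exists>r<K. \<not> g dvd ?tail r")
    case True
    then have units: "\<exists>r<K. ?tail r dvd 1"
      using unit_if_not_dvd by blast
    have "?A = (q ^ s - q ^ (s - 1)) * (q ^ s) ^ (K - 1)"
      by (simp only: Galpha_preimage_count[OF rho_bij \<open>1 \<le> K\<close> units] card_translated_non_multiples)
    moreover have "?B = (q ^ s) ^ (K - 1)"
      by (rule Suc.IH[OF True])
    moreover have "q ^ (s - 1) \<le> q ^ s"
      using q_ge_2 by (intro power_increasing) auto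
    then have "(q ^ s - q ^ (s - 1)) * (q ^ s) ^ (K - 1) + q ^ (s - 1) * (q ^ s) ^ (K - 1)
        = q ^ s * (q ^ s) ^ (K - 1)"
      by (metis add_mult_distrib le_add_diff_inverse2)
    moreover have "q ^ s * (q ^ s) ^ (K - 1) = (q ^ s) ^ K"
      using \<open>1 \<le> K\<close> by (cases K) simp_all
    ultimately show ?thesis
      by simp
  next
    case False
    then have "g dvd row_comb (G_alpha K) K ?tail c" "g dvd row_comb (G_beta K) K ?tail c" for c
      by (auto intro: row_comb_dvd)
    moreover have "\<not> g dvd l 0"
      using False Suc.prems by (auto simp: less_Suc_eq_0_disj)
    ultimately show ?thesis
      by (simp add: dvd_add_left_iff)
  qed
  finally show ?case
    by simp
qed

lemma codeword_weight_ge: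
  assumes "1 \<le> k" and "\<exists>r<k. l r \<noteq> 0"
  shows "(q ^ s) ^ (k - 1) \<le> codeword_weight (G_beta k) k (n_beta k) l"
proof -
  obtain t l' where "t < s" and l: "\<And>r. r < k \<Longrightarrow> l r = g ^ t * l' r"
    and "\<exists>r<k. \<not> g dvd l' r"
    using factor_out_pow[OF assms(2)] by blast
  have "(q ^ s) ^ (k - 1) = card {c. c < n_beta k \<and> \<not> g dvd row_comb (G_beta k) k l' c}"
    using non_multiple_coordinates_count[OF assms(1) \<open>\<exists>r<k. \<not> g dvd l' r\<close>]
    by (simp add: sum_of_bool_lessThan)
  also have "\<dots> \<le> codeword_weight (G_beta k) k (n_beta k) l"
    unfolding codeword_weight_def using pow_mult_neq_0[OF _ \<open>t < s\<close>]
    by (intro card_mono) (auto simp: row_comb_factor[OF l])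
  finally show ?thesis .
qed

lemma codeword_weight_first_row:
  assumes "2 \<le> k"
  shows "codeword_weight (G_beta k) k (n_beta k) (\<lambda>r. if r = 0 then g ^ (s - 1) else 0) = (q ^ s) ^ (k - 1)"
proof -
  obtain K where k: "k = Suc K" and "1 \<le> K"
    using assms by (cases k) auto
  let ?l = "\<lambda>r. if r = 0 then g ^ (s - 1) else 0"
  let ?nonzero = "\<lambda>c. of_bool (row_comb (G_beta (Suc K)) (Suc K) ?l c \<noteq> 0) :: nat"
  have tail: "(\<lambda>r. ?l (Suc r)) = (\<lambda>r. 0)"
    by simp
  have "(\<Sum>c<(q ^ s) ^ K. ?nonzero c) = (\<Sum>c<(q ^ s) ^ K. 1)"
    using pow_pred_s_neq_0
    by (intro sum.cong) (simp_all add: row_comb_Gbeta_alpha_block[OF \<open>1 \<le> K\<close>] tail)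
  moreover have "(\<Sum>j<q ^ (s - 1). \<Sum>w<n_beta K. ?nonzero ((q ^ s) ^ K + (j * n_beta K + w)))
      = (\<Sum>j<q ^ (s - 1). \<Sum>w<n_beta K. 0)"
  proof (intro sum.cong refl)
    fix j w assume "j \<in> {..<q ^ (s - 1)}" "w \<in> {..<n_beta K}"
    then have "j < q ^ (s - 1)" and "w < n_beta K"
      by simp_all
    then show "?nonzero ((q ^ s) ^ K + (j * n_beta K + w)) = 0"
      unfolding row_comb_Gbeta_beta_block[OF \<open>1 \<le> K\<close> \<open>w < n_beta K\<close>]
      using pow_pred_s_mult_eq_0[OF agam_dvd[OF \<open>j < q ^ (s - 1)\<close>]] by (simp add: tail)
  qed
  ultimately have "(\<Sum>c<n_beta k. ?nonzero c) = (q ^ s) ^ (k - 1)"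
    unfolding k sum_nbeta_Suc[OF \<open>1 \<le> K\<close>] by simp
  then show ?thesis
    unfolding codeword_weight_def k by (simp add: sum_of_bool_lessThan)
qed

lemma min_dist_S_beta:
  assumes "2 \<le> k"
  shows "min_dist (S_beta g s q e k) = (q ^ s) ^ (k - 1)"
  unfolding S_beta_def
proof (rule min_dist_row_span_eqI[OF _ codeword_weight_first_row[OF assms]])
  fix l assume "\<exists>c<n_beta k. row_comb (G_beta k) k l c \<noteq> 0"
  moreover have "row_comb (G_beta k) k l c = 0" if "\<forall>r<k. l r = 0" for c
    using that row_comb_cong[of k l "\<lambda>r. 0"] by simp
  ultimately have "\<exists>r<k. l r \<noteq> 0"
    by blast
  then show "(q ^ s) ^ (k - 1) \<le> codeword_weight (G_beta k) k (n_beta k) l"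
    using codeword_weight_ge assms by simp
next
  show "0 < (q ^ s) ^ (k - 1)"
    using q_ge_2 by simp
qed

end

theorem corollary3p22:
  fixes g :: "'a::{comm_ring_1,finite}" and s q k :: nat and e :: "nat \<Rightarrow> 'a"
  assumes chain: "chain_ring TYPE('a)"
    and maxg: "maximal_ideal (principal_ideal g)"
    and nil1: "g ^ s = 0" and nil2: "g ^ (s - 1) \<noteq> 0"
    and reps: "\<forall>x. \<exists>!i. i < q \<and> x - e i \<in> principal_ideal g"
    and e0: "e 0 = 0" and e1: "e 1 = 1"
    and k2: "k \<ge> 2"
  shows "min_dist (S_beta g s q e k) = L_beta q s k - q ^ (s - 1) * L_beta q s (k - 1)
       \<and> L_beta q s k - q ^ (s - 1) * L_beta q s (k - 1) = q ^ (s * (k - 1))"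
proof -
  interpret gamma_adic_ring g s q e
    using maxg nil1 nil2 reps by unfold_locales
  have "min_dist (S_beta g s q e k) = q ^ (s * (k - 1))"
    using min_dist_S_beta[OF k2] by (simp add: power_mult)
  moreover have "L_beta q s k - q ^ (s - 1) * L_beta q s (k - 1) = q ^ (s * (k - 1))"
    using L_beta_diff q_ge_2 s_pos k2 by simp
  ultimately show ?thesis
    by simp
qed

end
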